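(* Let $\alpha_1,\alpha_2>0$, $\beta_j\in(0,\alpha_j)$ and $\gamma_j:=\alpha_j-\beta_j$, $j=1,2$. If $\mu_j\in\mathcal M_{\beta_j}(\mathbb R_+)$, $j=1,2$, and $\mu=\mu_1\otimes_{\alpha_1,\alpha_2}\mu_2$, then $\mu\in\mathcal M_{\beta_1+\beta_2}(\mathbb R_+)$ and $$\|\mu\|_{\beta_1+\beta_2}\le\min(A_1,A_2)\,\|\mu_1\|_{\beta_1}\|\mu_2\|_{\beta_2},$$ where $$A_1=\frac{\beta_1^{\beta_1}\beta_2^{\beta_2}}{(\beta_1+\beta_2)^{\beta_1+\beta_2}}\cdot\frac{B(\gamma_1,\gamma_2)}{B(\alpha_1,\alpha_2)},\qquad A_2=\frac{\gamma_1^{\gamma_1}\gamma_2^{\gamma_2}}{(\gamma_1+\gamma_2)^{\gamma_1+\gamma_2}}\cdot\frac{B(\beta_1,\beta_2)}{B(\alpha_1,\alpha_2)}.$$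
   Context: $\mathbb R_+=[0,\infty)$. For $\alpha\ge0$, $\mathcal M_\alpha(\mathbb R_+)$ is the space of complex Radon measures $\mu$ on $\mathbb R_+$ with $\|\mu\|_\alpha:=\int_{\mathbb R_+}(1+t)^{-\alpha}|\mu|(dt)<\infty$ (note $\mathcal M_\beta(\mathbb R_+)\subset\mathcal M_\alpha(\mathbb R_+)$ for $\beta\le\alpha$). $B$ is the beta function. For $\mu_j\in\mathcal M_{\alpha_j}(\mathbb R_+)$, the Stieltjes convolution $\mu_1\otimes_{\alpha_1,\alpha_2}\mu_2$ is the measure $u(\tau)\,d\tau+\mu_1(\{\tau\})\mu_2(d\tau)$, where for a.e. $\tau\ge0$ $$B(\alpha_1,\alpha_2)u(\tau)=\int_{(\tau,\infty)}\int_{[0,\tau)}\frac{(\tau-s)^{\alpha_2-1}(t-\tau)^{\alpha_1-1}}{(t-s)^{\alpha_1+\alpha_2-1}}\mu_1(ds)\mu_2(dt)+\int_{(\tau,\infty)}\int_{[0,\tau)}\frac{(\tau-s)^{\alpha_1-1}(t-\tau)^{\alpha_2-1}}{(t-s)^{\alpha_1+\alpha_2-1}}\mu_2(ds)\mu_1(dt).$$ *)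

theory Defs
  imports "HOL-Analysis.Analysis"
begin

text \<open>A complex Radon measure mu on R_+ is represented in polar form: mu(dt) = h t nu(dt),
  where nu is a locally finite positive Borel measure on the reals, concentrated on [0,inf),
  and h is Borel with |h| = 1. Then nu is the total variation |mu|.\<close>
definition cRadon :: "real measure \<Rightarrow> (real \<Rightarrow> complex) \<Rightarrow> bool" where
  "cRadon \<nu> h \<longleftrightarrow> sets \<nu> = sets borel \<and> emeasure \<nu> {..<0} = 0 \<and>
     (\<forall>a. emeasure \<nu> {0..a} < \<infinity>) \<and> h \<in> borel_measurable borel \<and> (\<forall>t. cmod (h t) = 1)"

definition wnorm :: "real \<Rightarrow> real measure \<Rightarrow> ennreal" where
  "wnorm \<alpha> \<nu> = (\<integral>\<^sup>+ t. ennreal ((1 + t) powr (- \<alpha>)) \<partial>\<nu>)"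

definition ptmass :: "real measure \<Rightarrow> (real \<Rightarrow> complex) \<Rightarrow> real \<Rightarrow> complex" where
  "ptmass \<nu> h \<tau> = h \<tau> * complex_of_real (measure \<nu> {\<tau>})"

definition stint :: "real \<Rightarrow> real \<Rightarrow> real measure \<Rightarrow> (real \<Rightarrow> complex) \<Rightarrow>
    real measure \<Rightarrow> (real \<Rightarrow> complex) \<Rightarrow> real \<Rightarrow> complex" where
  "stint a b \<nu> h \<nu>' h' \<tau> =
     (LINT t:{\<tau><..}|\<nu>'. h' t *
        (LINT s:{0..<\<tau>}|\<nu>. h s * complex_of_real
           ((\<tau> - s) powr (a - 1) * (t - \<tau>) powr (b - 1) / (t - s) powr (a + b - 1))))"

definition sconv_density :: "real \<Rightarrow> real \<Rightarrow> real measure \<Rightarrow> (real \<Rightarrow> complex) \<Rightarrow>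
    real measure \<Rightarrow> (real \<Rightarrow> complex) \<Rightarrow> real \<Rightarrow> complex" where
  "sconv_density a1 a2 \<nu>1 h1 \<nu>2 h2 \<tau> =
     (stint a2 a1 \<nu>1 h1 \<nu>2 h2 \<tau> + stint a1 a2 \<nu>2 h2 \<nu>1 h1 \<tau>) / complex_of_real (Beta a1 a2)"

text \<open>(nu,h) represents mu1 (x)_{a1,a2} mu2 = u(tau) dtau + mu1({tau}) mu2(dtau) on bounded Borel subsets of R_+.\<close>
definition is_sconv :: "real \<Rightarrow> real \<Rightarrow> real measure \<Rightarrow> (real \<Rightarrow> complex) \<Rightarrow>
    real measure \<Rightarrow> (real \<Rightarrow> complex) \<Rightarrow> real measure \<Rightarrow> (real \<Rightarrow> complex) \<Rightarrow> bool" where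
  "is_sconv a1 a2 \<nu>1 h1 \<nu>2 h2 \<nu> h \<longleftrightarrow>
     cRadon \<nu> h \<and>
     (\<forall>A \<in> sets borel. bounded A \<longrightarrow> A \<subseteq> {0..} \<longrightarrow>
        set_integrable lborel A (sconv_density a1 a2 \<nu>1 h1 \<nu>2 h2) \<and>
        (LINT t:A|\<nu>. h t) =
          (LINT \<tau>:A|lborel. sconv_density a1 a2 \<nu>1 h1 \<nu>2 h2 \<tau>)
          + (LINT \<tau>:A|\<nu>2. ptmass \<nu>1 h1 \<tau> * h2 \<tau>))"

end

theory Submission
  imports Defs
begin

text \<open>The total variation of \<open>\<mu> = \<mu>1 \<otimes> \<mu>2\<close> is \<open>|u(\<tau>)| d\<tau> + |\<mu>1({\<tau>})| |\<mu>2|(d\<tau>)\<close>. Bounding \<open>|u|\<close>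
  by the two iterated kernel integrals and applying Tonelli reduces the estimate of the absolutely
  continuous part to the one-dimensional bound
  \<open>\<integral>\<^sub>s\<^sup>t (1 + \<tau>) powr -(\<beta>1 + \<beta>2) K(\<tau>) d\<tau> \<le> min A\<^sub>1 A\<^sub>2 \<cdot> B(\<alpha>1, \<alpha>2) \<cdot> (1 + s) powr -\<beta>1 \<cdot> (1 + t) powr -\<beta>2\<close>
  for the kernel \<open>K(\<tau>) = (\<tau> - s) powr (\<alpha>1 - 1) \<cdot> (t - \<tau>) powr (\<alpha>2 - 1) / (t - s) powr (\<alpha>1 + \<alpha>2 - 1)\<close>.
  Both bounds come from the weighted AM-GM inequality
  \<open>X powr a \<cdot> Y powr b \<le> a powr a \<cdot> b powr b / (a + b) powr (a + b) \<cdot> (X + Y) powr (a + b)\<close>.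
  Applied to \<open>(1 + \<tau>)(t - s) = (t - \<tau>)(1 + s) + (\<tau> - s)(1 + t)\<close> it trades the weight for the
  endpoint factors and leaves a \<open>B(\<gamma>1, \<gamma>2)\<close> integral (bound \<open>A\<^sub>1\<close>). Applied to
  \<open>(\<tau> - s) + (t - \<tau>) = t - s\<close> it lowers the exponents of \<open>K\<close> from \<open>\<alpha>\<close> to \<open>\<beta>\<close>, and the Moebius
  substitution \<open>y = (\<tau> - s)(1 + t) / ((t - s)(1 + \<tau>))\<close> evaluates what remains as \<open>B(\<beta>1, \<beta>2)\<close> times
  the endpoint factors (bound \<open>A\<^sub>2\<close>). The regions \<open>s < t\<close> and \<open>t < s\<close> of \<open>\<mu>1 \<times> \<mu>2\<close> carry the two
  terms of \<open>u\<close>, the diagonal carries the atomic part, and together they give \<open>\<parallel>\<mu>1\<parallel> \<cdot> \<parallel>\<mu>2\<parallel>\<close>; the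
  diagonal is absorbed because \<open>min A\<^sub>1 A\<^sub>2 \<ge> 1\<close>, which is the same AM-GM inequality integrated
  over \<open>[0, 1]\<close>.\<close>

section \<open>Weighted AM-GM and Beta integrals\<close>

definition amgm_const :: "real \<Rightarrow> real \<Rightarrow> real" where
  "amgm_const a b = a powr a * b powr b / (a + b) powr (a + b)"

lemma amgm_const_commute: "amgm_const a b = amgm_const b a"
  by (simp add: amgm_const_def add.commute mult.commute)

lemma amgm_const_nonneg [simp]: "amgm_const a b \<ge> 0"
  by (simp add: amgm_const_def)

lemma amgm_const_pos: "a > 0 \<Longrightarrow> b > 0 \<Longrightarrow> amgm_const a b > 0"
  by (simp add: amgm_const_def)

lemma powr_mult_le_amgm_const:
  fixes X Y a b :: real
  assumes "X \<ge> 0" "Y \<ge> 0" "a > 0" "b > 0"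
  shows "X powr a * Y powr b \<le> amgm_const a b * (X + Y) powr (a + b)"
proof (cases "X = 0 \<or> Y = 0")
  case True
  then show ?thesis using assms amgm_const_pos[of a b] by auto
next
  case False
  then have X: "X > 0" and Y: "Y > 0" using assms by auto
  define p q where "p = a / (a + b)" and "q = b / (a + b)"
  have pq: "p > 0" "q > 0" "p + q = 1"
    using assms unfolding p_def q_def by (auto simp: add_divide_distrib[symmetric])
  have "(X / p) powr p * (Y / q) powr q \<le> p * (X / p) + q * (Y / q)"
    by (rule Youngs_inequality_0) (use pq X Y in auto)
  also have "\<dots> = X + Y" using pq by simp
  finally have "((X / p) powr p * (Y / q) powr q) powr (a + b) \<le> (X + Y) powr (a + b)"
    by (intro powr_mono2) (use assms pq X Y in auto)
  moreover have "((X / p) powr p * (Y / q) powr q) powr (a + b) = (X / p) powr a * (Y / q) powr b"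
    using pq X Y assms
    by (simp add: powr_mult powr_powr p_def q_def add_pos_pos[of a b, THEN less_imp_neq, symmetric])
  ultimately have young: "(X / p) powr a * (Y / q) powr b \<le> (X + Y) powr (a + b)" by simp
  have "X powr a * Y powr b = ((X / p) powr a * (Y / q) powr b) * (p powr a * q powr b)"
    using pq X Y by (simp add: powr_divide field_simps)
  also have "\<dots> \<le> (X + Y) powr (a + b) * (p powr a * q powr b)"
    by (rule mult_right_mono[OF young]) auto
  also have "p powr a * q powr b = amgm_const a b"
    using assms unfolding p_def q_def amgm_const_def
    by (simp add: powr_divide powr_add field_simps)
  finally show ?thesis by (simp add: mult.commute)
qed

lemma Beta_pos: "a > 0 \<Longrightarrow> b > 0 \<Longrightarrow> Beta a b > (0::real)"
  by (simp add: Beta_def Gamma_real_pos)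

lemma nn_integral_Beta:
  assumes "a > 0" "b > 0"
  shows "(\<integral>\<^sup>+x. ennreal (x powr (a-1) * (1-x) powr (b-1) * indicator {0..1} x) \<partial>lborel)
    = ennreal (Beta a b)"
  using nn_integral_has_integral_lebesgue[OF _ has_integral_Beta_real[OF assms]]
  by (simp add: mult.commute)

lemma nn_integral_Beta_substitution:
  fixes g g' :: "real \<Rightarrow> real"
  assumes "a > 0" "b > 0" "s \<le> t" "g s = 0" "g t = 1"
    and "\<And>x. x \<in> {s..t} \<Longrightarrow> (g has_real_derivative g' x) (at x)"
    and "continuous_on {s..t} g'" "\<And>x. x \<in> {s..t} \<Longrightarrow> 0 \<le> g' x"
  shows "(\<integral>\<^sup>+x. ennreal ((g x) powr (a-1) * (1 - g x) powr (b-1) * g' x * indicator {s..t} x) \<partial>lborel)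
    = ennreal (Beta a b)"
proof -
  have "(\<integral>\<^sup>+x. ennreal (x powr (a-1) * (1-x) powr (b-1) * indicator {g s..g t} x) \<partial>lborel)
      = (\<integral>\<^sup>+x. ennreal ((g x) powr (a-1) * (1 - g x) powr (b-1) * g' x * indicator {s..t} x) \<partial>lborel)"
    by (rule nn_integral_substitution[where f = "\<lambda>x. x powr (a-1) * (1-x) powr (b-1)"])
       (use assms in \<open>auto simp: set_borel_measurable_def\<close>)
  then show ?thesis using nn_integral_Beta[OF assms(1,2)] assms(4,5) by simp
qed

section \<open>The Stieltjes kernel\<close>

definition stieltjes_kernel :: "real \<Rightarrow> real \<Rightarrow> real \<Rightarrow> real \<Rightarrow> real \<Rightarrow> real" where
  "stieltjes_kernel a b x s t = (x - s) powr (a - 1) * (t - x) powr (b - 1) / (t - s) powr (a + b - 1)"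

lemma measurable_stieltjes_kernel [measurable (raw)]:
  assumes [measurable]: "f \<in> borel_measurable M" "g \<in> borel_measurable M" "h \<in> borel_measurable M"
  shows "(\<lambda>x. stieltjes_kernel a b (f x) (g x) (h x)) \<in> borel_measurable M"
  unfolding stieltjes_kernel_def by measurable

lemma stieltjes_kernel_nonneg: "stieltjes_kernel a b x s t \<ge> 0"
  by (simp add: stieltjes_kernel_def)

lemma stieltjes_kernel_endpoints [simp]:
  "stieltjes_kernel a b s s t = 0" "stieltjes_kernel a b t s t = 0"
  by (simp_all add: stieltjes_kernel_def)

lemma nn_integral_stieltjes_kernel:
  assumes "s < t" "a > 0" "b > 0"
  shows "(\<integral>\<^sup>+x. ennreal (stieltjes_kernel a b x s t * indicator {s..t} x) \<partial>lborel) = ennreal (Beta a b)"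
proof -
  define g where "g x = (x - s) / (t - s)" for x
  have "stieltjes_kernel a b x s t = g x powr (a-1) * (1 - g x) powr (b-1) * (1 / (t - s))"
    if x: "x \<in> {s..t}" for x
  proof -
    have one_minus_g: "1 - g x = (t - x) / (t - s)" using assms by (simp add: g_def field_simps)
    consider "x = s" | "x = t" | "x \<in> {s<..<t}" using x by (cases "x = s \<or> x = t") auto
    then show ?thesis
    proof cases
      case 3
      then have "s < x" "x < t" by auto
      have "stieltjes_kernel a b x s t
          = ((x - s) / (t - s)) powr (a-1) * ((t - x) / (t - s)) powr (b-1) * (1 / (t - s))"
        unfolding stieltjes_kernel_def
        by (rule ln_inj_iff[THEN iffD1];
            use \<open>s < x\<close> \<open>x < t\<close> in \<open>simp add: ln_mult ln_div algebra_simps\<close>)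
      then show ?thesis unfolding one_minus_g by (simp add: g_def)
    qed (simp_all add: g_def one_minus_g)
  qed
  then have "(\<integral>\<^sup>+x. ennreal (stieltjes_kernel a b x s t * indicator {s..t} x) \<partial>lborel)
      = (\<integral>\<^sup>+x. ennreal (g x powr (a-1) * (1 - g x) powr (b-1) * (1 / (t - s)) * indicator {s..t} x) \<partial>lborel)"
    by (intro nn_integral_cong) (simp split: split_indicator)
  also have "\<dots> = ennreal (Beta a b)"
    by (rule nn_integral_Beta_substitution)
       (use assms in \<open>auto simp: g_def intro!: derivative_eq_intros\<close>)
  finally show ?thesis .
qed

lemma nn_integral_weighted_stieltjes_kernel:
  assumes "-1 < s" "s < t" "a > 0" "b > 0"
  shows "(\<integral>\<^sup>+x. ennreal ((1 + x) powr -(a + b) * stieltjes_kernel a b x s t * indicator {s..t} x) \<partial>lborel)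
    = ennreal (Beta a b * (1 + s) powr -b * (1 + t) powr -a)"
proof -
  define g g' where "g x = (x - s) * (1 + t) / ((t - s) * (1 + x))"
    and "g' x = (1 + s) * (1 + t) / ((t - s) * (1 + x)^2)" for x
  define c where "c = (1 + s) powr b * (1 + t) powr a"
  have c: "c > 0" using assms by (simp add: c_def)
  have "c * ((1 + x) powr -(a + b) * stieltjes_kernel a b x s t) = g x powr (a-1) * (1 - g x) powr (b-1) * g' x"
    if x: "x \<in> {s..t}" for x
  proof -
    have "(t - s) * (1 + x) \<noteq> 0" using x assms by auto
    moreover have "(t - s) * (1 + x) - (x - s) * (1 + t) = (t - x) * (1 + s)"
      by (simp add: algebra_simps)
    ultimately have one_minus_g: "1 - g x = (t - x) * (1 + s) / ((t - s) * (1 + x))"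
      unfolding g_def by (metis diff_divide_distrib divide_self)
    consider "x = s" | "x = t" | "x \<in> {s<..<t}" using x by (cases "x = s \<or> x = t") auto
    then show ?thesis
    proof cases
      case 3
      define X Y L p q R where "X = x - s" and "Y = t - x" and "L = t - s"
        and "p = 1 + s" and "q = 1 + t" and "R = 1 + x"
      have pos: "X > 0" "Y > 0" "L > 0" "p > 0" "q > 0" "R > 0"
        using 3 assms by (auto simp: X_def Y_def L_def p_def q_def R_def)
      have "p powr b * q powr a * (R powr -(a + b) * (X powr (a-1) * Y powr (b-1) / L powr (a+b-1)))
          = (X * q / (L * R)) powr (a-1) * (Y * p / (L * R)) powr (b-1) * (p * q / (L * R^2))"
        by (rule ln_inj_iff[THEN iffD1]; use pos in \<open>simp add: ln_mult ln_div ln_realpow algebra_simps\<close>)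
      then show ?thesis
        unfolding one_minus_g unfolding g_def g'_def c_def stieltjes_kernel_def X_def Y_def L_def p_def q_def R_def .
    qed (use one_minus_g in \<open>simp_all add: g_def\<close>)
  qed
  then have "(\<integral>\<^sup>+x. ennreal (c * ((1 + x) powr -(a + b) * stieltjes_kernel a b x s t) * indicator {s..t} x) \<partial>lborel)
      = (\<integral>\<^sup>+x. ennreal (g x powr (a-1) * (1 - g x) powr (b-1) * g' x * indicator {s..t} x) \<partial>lborel)"
    by (intro nn_integral_cong) (simp split: split_indicator)
  also have "\<dots> = ennreal (Beta a b)"
  proof (rule nn_integral_Beta_substitution)
    show "(g has_real_derivative g' x) (at x)" if "x \<in> {s..t}" for x
    proof -
      have nz: "1 + x \<noteq> 0" "t - s \<noteq> 0" using that assms by auto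
      then have "(g has_real_derivative
          ((1 + t) * ((t - s) * (1 + x)) - (x - s) * (1 + t) * (t - s)) / ((t - s) * (1 + x))^2) (at x)"
        unfolding g_def by (auto intro!: derivative_eq_intros simp: power2_eq_square)
      moreover have "(1 + t) * ((t - s) * (1 + x)) - (x - s) * (1 + t) * (t - s) = (t - s) * ((1 + s) * (1 + t))"
        by (simp add: algebra_simps)
      then have "((1 + t) * ((t - s) * (1 + x)) - (x - s) * (1 + t) * (t - s)) / ((t - s) * (1 + x))^2 = g' x"
        using nz by (simp add: g'_def power_mult_distrib power2_eq_square)
      ultimately show ?thesis by simp
    qed
  qed (use assms in \<open>auto simp: g_def g'_def intro!: continuous_intros\<close>)
  finally have "ennreal (Beta a b)
      = (\<integral>\<^sup>+x. ennreal c * ennreal ((1 + x) powr -(a + b) * stieltjes_kernel a b x s t * indicator {s..t} x) \<partial>lborel)"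
    using c by (simp add: ennreal_mult' mult.assoc)
  also have "\<dots> = ennreal c * (\<integral>\<^sup>+x. ennreal ((1 + x) powr -(a + b) * stieltjes_kernel a b x s t * indicator {s..t} x) \<partial>lborel)"
    by (rule nn_integral_cmult) measurable
  also have "ennreal (Beta a b) = ennreal c * ennreal (Beta a b * (1 + s) powr -b * (1 + t) powr -a)"
    using assms c by (simp add: c_def powr_minus ennreal_mult'[symmetric] field_simps)
  finally show ?thesis using c by (simp add: ennreal_mult_cancel_left)
qed

lemma stieltjes_kernel_le:
  assumes "s < x" "x < t" "c < a" "d < b"
  shows "stieltjes_kernel a b x s t \<le> amgm_const (a - c) (b - d) * stieltjes_kernel c d x s t"
proof -
  define X Y L where "X = x - s" and "Y = t - x" and "L = t - s"
  have pos: "X > 0" "Y > 0" "L > 0" using assms by (auto simp: X_def Y_def L_def)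
  define V where "V = X powr (c - 1) * Y powr (d - 1) / L powr (a + b - 1)"
  have "X powr (a - c) * Y powr (b - d) \<le> amgm_const (a - c) (b - d) * L powr ((a - c) + (b - d))"
    using powr_mult_le_amgm_const[of X Y "a - c" "b - d"] pos assms by (simp add: X_def Y_def L_def)
  then have "X powr (a - c) * Y powr (b - d) * V \<le> amgm_const (a - c) (b - d) * L powr ((a - c) + (b - d)) * V"
    by (rule mult_right_mono) (simp add: V_def)
  moreover have "X powr (a - c) * Y powr (b - d) * V = stieltjes_kernel a b x s t"
    unfolding stieltjes_kernel_def V_def X_def[symmetric] Y_def[symmetric] L_def[symmetric]
    by (rule ln_inj_iff[THEN iffD1]; use pos in \<open>simp add: ln_mult ln_div algebra_simps\<close>)
  moreover have "L powr ((a - c) + (b - d)) * V = stieltjes_kernel c d x s t"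
    unfolding stieltjes_kernel_def V_def X_def[symmetric] Y_def[symmetric] L_def[symmetric]
    by (rule ln_inj_iff[THEN iffD1]; use pos in \<open>simp add: ln_mult ln_div algebra_simps\<close>)
  ultimately show ?thesis by (simp add: mult.assoc)
qed

lemma weighted_stieltjes_kernel_le:
  assumes "-1 < s" "s < x" "x < t" "0 < c" "0 < d"
  shows "(1 + x) powr -(c + d) * stieltjes_kernel a b x s t
    \<le> amgm_const c d * (1 + s) powr -d * (1 + t) powr -c * stieltjes_kernel (a - c) (b - d) x s t"
proof -
  define X Y L p q R where "X = x - s" and "Y = t - x" and "L = t - s"
    and "p = 1 + s" and "q = 1 + t" and "R = 1 + x"
  have pos: "X > 0" "Y > 0" "L > 0" "p > 0" "q > 0" "R > 0"
    using assms by (auto simp: X_def Y_def L_def p_def q_def R_def)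
  have "X * q + Y * p = L * R" by (simp add: X_def Y_def L_def p_def q_def R_def algebra_simps)
  then have "(X * q) powr c * (Y * p) powr d \<le> amgm_const c d * (L * R) powr (c + d)"
    using powr_mult_le_amgm_const[of "X * q" "Y * p" c d] pos assms by simp
  moreover define W where "W = X powr (a - c - 1) * Y powr (b - d - 1) * p powr -d * q powr -c
    * R powr -(c + d) / L powr (a + b - 1)"
  ultimately have "(X * q) powr c * (Y * p) powr d * W \<le> amgm_const c d * (L * R) powr (c + d) * W"
    by (intro mult_right_mono) (simp_all add: W_def)
  moreover have "(X * q) powr c * (Y * p) powr d * W = (1 + x) powr -(c + d) * stieltjes_kernel a b x s t"
    unfolding W_def stieltjes_kernel_def X_def[symmetric] Y_def[symmetric] L_def[symmetric] R_def[symmetric]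
    by (rule ln_inj_iff[THEN iffD1]; use pos in \<open>simp add: ln_mult ln_div algebra_simps\<close>)
  moreover have "(L * R) powr (c + d) * W = p powr -d * q powr -c * stieltjes_kernel (a - c) (b - d) x s t"
    unfolding W_def stieltjes_kernel_def X_def[symmetric] Y_def[symmetric] L_def[symmetric]
    by (rule ln_inj_iff[THEN iffD1]; use pos in \<open>simp add: ln_mult ln_div algebra_simps\<close>)
  ultimately show ?thesis by (simp add: p_def q_def mult.assoc)
qed

lemma nn_integral_weighted_stieltjes_kernel_le_shifted:
  assumes "-1 < s" "s < t" "0 < c" "c < a" "0 < d" "d < b"
  shows "(\<integral>\<^sup>+x. ennreal ((1 + x) powr -(c + d) * stieltjes_kernel a b x s t * indicator {s..t} x) \<partial>lborel)
    \<le> ennreal (amgm_const c d * Beta (a - c) (b - d) * ((1 + s) powr -d * (1 + t) powr -c))"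
proof -
  define P where "P = (1 + s) powr -d * (1 + t) powr -c"
  have "(\<integral>\<^sup>+x. ennreal ((1 + x) powr -(c + d) * stieltjes_kernel a b x s t * indicator {s..t} x) \<partial>lborel)
      \<le> (\<integral>\<^sup>+x. ennreal (amgm_const c d * P * (stieltjes_kernel (a - c) (b - d) x s t * indicator {s..t} x)) \<partial>lborel)"
  proof (intro nn_integral_mono ennreal_leI)
    fix x :: real
    show "(1 + x) powr -(c + d) * stieltjes_kernel a b x s t * indicator {s..t} x
      \<le> amgm_const c d * P * (stieltjes_kernel (a - c) (b - d) x s t * indicator {s..t} x)"
      using weighted_stieltjes_kernel_le[of s x t c d a b] assms
      by (cases "x = s \<or> x = t") (auto simp: P_def mult.assoc split: split_indicator)
  qed
  also have "\<dots> = ennreal (amgm_const c d * P) * ennreal (Beta (a - c) (b - d))"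
    using assms by (simp add: P_def ennreal_mult' nn_integral_cmult nn_integral_stieltjes_kernel)
  also have "\<dots> = ennreal (amgm_const c d * Beta (a - c) (b - d) * P)"
    by (subst ennreal_mult'[symmetric]) (simp_all add: P_def mult_ac)
  finally show ?thesis by (simp add: P_def)
qed

lemma nn_integral_weighted_stieltjes_kernel_le_lowered:
  assumes "-1 < s" "s < t" "0 < c" "c < a" "0 < d" "d < b"
  shows "(\<integral>\<^sup>+x. ennreal ((1 + x) powr -(c + d) * stieltjes_kernel a b x s t * indicator {s..t} x) \<partial>lborel)
    \<le> ennreal (amgm_const (a - c) (b - d) * Beta c d * ((1 + s) powr -d * (1 + t) powr -c))"
proof -
  have "(\<integral>\<^sup>+x. ennreal ((1 + x) powr -(c + d) * stieltjes_kernel a b x s t * indicator {s..t} x) \<partial>lborel)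
      \<le> (\<integral>\<^sup>+x. ennreal (amgm_const (a - c) (b - d) *
          ((1 + x) powr -(c + d) * stieltjes_kernel c d x s t * indicator {s..t} x)) \<partial>lborel)"
  proof (intro nn_integral_mono ennreal_leI)
    fix x :: real
    show "(1 + x) powr -(c + d) * stieltjes_kernel a b x s t * indicator {s..t} x
      \<le> amgm_const (a - c) (b - d) * ((1 + x) powr -(c + d) * stieltjes_kernel c d x s t * indicator {s..t} x)"
      using mult_left_mono[OF stieltjes_kernel_le[of s x t c a d b], of "(1 + x) powr -(c + d)"] assms
      by (cases "x = s \<or> x = t") (auto simp: mult_ac split: split_indicator)
  qed
  also have "\<dots> = ennreal (amgm_const (a - c) (b - d))
      * (\<integral>\<^sup>+x. ennreal ((1 + x) powr -(c + d) * stieltjes_kernel c d x s t * indicator {s..t} x) \<partial>lborel)"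
    unfolding ennreal_mult'[OF amgm_const_nonneg] by (rule nn_integral_cmult) measurable
  also have "\<dots> = ennreal (amgm_const (a - c) (b - d)) * ennreal (Beta c d * ((1 + s) powr -d * (1 + t) powr -c))"
    using nn_integral_weighted_stieltjes_kernel[of s t c d] assms by (simp add: mult.assoc)
  also have "\<dots> = ennreal (amgm_const (a - c) (b - d) * Beta c d * ((1 + s) powr -d * (1 + t) powr -c))"
    by (subst ennreal_mult'[symmetric]) (simp_all add: mult_ac)
  finally show ?thesis .
qed

text \<open>\<open>conv_const \<alpha>1 \<alpha>2 \<beta>1 \<beta>2 / Beta \<alpha>1 \<alpha>2\<close> is the constant \<open>min A\<^sub>1 A\<^sub>2\<close> of the theorem.\<close>
definition conv_const :: "real \<Rightarrow> real \<Rightarrow> real \<Rightarrow> real \<Rightarrow> real" where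
  "conv_const a b c d = min (amgm_const c d * Beta (a - c) (b - d)) (amgm_const (a - c) (b - d) * Beta c d)"

lemma conv_const_commute: "conv_const b a d c = conv_const a b c d"
  by (simp add: conv_const_def amgm_const_commute Beta_commute)

lemma nn_integral_weighted_stieltjes_kernel_le:
  assumes "-1 < s" "s < t" "0 < c" "c < a" "0 < d" "d < b"
  shows "(\<integral>\<^sup>+x. ennreal ((1 + x) powr -(c + d) * stieltjes_kernel a b x s t * indicator {s..t} x) \<partial>lborel)
    \<le> ennreal (conv_const a b c d * ((1 + s) powr -d * (1 + t) powr -c))"
  using nn_integral_weighted_stieltjes_kernel_le_shifted[OF assms]
    nn_integral_weighted_stieltjes_kernel_le_lowered[OF assms]
  unfolding conv_const_def min_def by (auto simp: min_def)

lemma Beta_le_amgm_const_Beta: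
  assumes "0 < c" "c < a" "0 < d" "d < b"
  shows "Beta a b \<le> amgm_const (a - c) (b - d) * Beta c d"
proof -
  have "ennreal (Beta a b) = (\<integral>\<^sup>+x. ennreal (stieltjes_kernel a b x 0 1 * indicator {0..1} x) \<partial>lborel)"
    using assms by (simp add: nn_integral_stieltjes_kernel)
  also have "\<dots> \<le> (\<integral>\<^sup>+x. ennreal (amgm_const (a - c) (b - d) * (stieltjes_kernel c d x 0 1 * indicator {0..1} x)) \<partial>lborel)"
  proof (intro nn_integral_mono ennreal_leI)
    fix x :: real
    show "stieltjes_kernel a b x 0 1 * indicator {0..1} x
      \<le> amgm_const (a - c) (b - d) * (stieltjes_kernel c d x 0 1 * indicator {0..1} x)"
      using stieltjes_kernel_le[of 0 x 1 c a d b] assms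
      by (cases "x = 0 \<or> x = 1") (auto split: split_indicator)
  qed
  also have "\<dots> = ennreal (amgm_const (a - c) (b - d) * Beta c d)"
    using assms amgm_const_pos[of "a - c" "b - d"]
    by (simp add: ennreal_mult' nn_integral_cmult nn_integral_stieltjes_kernel)
  finally show ?thesis
    using assms amgm_const_pos[of "a - c" "b - d"] Beta_pos[of c d] by (simp add: ennreal_le_iff)
qed

lemma Beta_le_conv_const:
  assumes "0 < c" "c < a" "0 < d" "d < b"
  shows "Beta a b \<le> conv_const a b c d"
  using Beta_le_amgm_const_Beta[OF assms] Beta_le_amgm_const_Beta[of "a - c" a "b - d" b] assms
  by (simp add: conv_const_def)

lemma conv_const_pos:
  assumes "0 < c" "c < a" "0 < d" "d < b"
  shows "conv_const a b c d > 0"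
  using Beta_le_conv_const[OF assms] Beta_pos[of a b] assms by simp

section \<open>Sums of measures\<close>

definition plus_measure :: "'a measure \<Rightarrow> 'a measure \<Rightarrow> 'a measure" where
  "plus_measure M N = measure_of (space M) (sets M) (\<lambda>A. emeasure M A + emeasure N A)"

lemma sets_plus_measure [simp, measurable_cong]: "sets (plus_measure M N) = sets M"
  unfolding plus_measure_def by (simp add: sets.space_closed sets.sigma_sets_eq)

lemma space_plus_measure [simp]: "space (plus_measure M N) = space M"
  unfolding plus_measure_def by (simp add: sets.space_closed)

lemma emeasure_plus_measure:
  assumes N: "sets N = sets M" and A: "A \<in> sets M"
  shows "emeasure (plus_measure M N) A = emeasure M A + emeasure N A"
  unfolding plus_measure_def
proof (rule emeasure_measure_of_sigma[OF sets.sigma_algebra_axioms _ _ A])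
  show "positive (sets M) (\<lambda>A. emeasure M A + emeasure N A)" by (simp add: positive_def)
  show "countably_additive (sets M) (\<lambda>A. emeasure M A + emeasure N A)"
    unfolding countably_additive_def
  proof (intro allI impI)
    fix F :: "nat \<Rightarrow> 'a set"
    assume F: "range F \<subseteq> sets M" "disjoint_family F" "\<Union> (range F) \<in> sets M"
    then have "(\<Sum>i. emeasure M (F i) + emeasure N (F i)) = (\<Sum>i. emeasure M (F i)) + (\<Sum>i. emeasure N (F i))"
      by (intro suminf_add[symmetric]) auto
    then show "(\<Sum>i. emeasure M (F i) + emeasure N (F i)) = emeasure M (\<Union> (range F)) + emeasure N (\<Union> (range F))"
      using F N by (simp add: suminf_emeasure)
  qed
qed

lemma nn_integral_plus_measure:
  assumes N: "sets N = sets M" and f: "f \<in> borel_measurable M"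
  shows "(\<integral>\<^sup>+x. f x \<partial>plus_measure M N) = (\<integral>\<^sup>+x. f x \<partial>M) + (\<integral>\<^sup>+x. f x \<partial>N)"
  using f
proof (induct rule: borel_measurable_induct)
  case (cong f g)
  have "integral\<^sup>N K f = integral\<^sup>N K g" if "space K = space M" for K
    using cong that by (intro nn_integral_cong) auto
  then show ?case using cong sets_eq_imp_space_eq[OF N] by simp
next
  case (set A)
  then show ?case using N by (simp add: emeasure_plus_measure)
next
  case (mult u c)
  then show ?case using N by (simp add: nn_integral_cmult distrib_left measurable_cong_sets[OF N refl])
next
  case (add u v)
  then show ?case using N by (simp add: nn_integral_add algebra_simps measurable_cong_sets[OF N refl])
next
  case (seq U)
  have "(\<integral>\<^sup>+x. (SUP i. U i x) \<partial>K) = (SUP i. \<integral>\<^sup>+x. U i x \<partial>K)" if "sets K = sets M" for K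
    using seq by (intro nn_integral_monotone_convergence_SUP) (auto simp: measurable_cong_sets[OF that refl])
  moreover have "incseq (\<lambda>i. \<integral>\<^sup>+x. U i x \<partial>K)" for K
    using seq(4) by (auto simp: incseq_def le_fun_def intro!: nn_integral_mono)
  ultimately show ?case using seq N by (simp add: image_image ennreal_SUP_add[symmetric] SUP_apply[abs_def])
qed

lemma integrable_plus_measure_iff:
  fixes f :: "'a \<Rightarrow> 'b::{banach, second_countable_topology}"
  assumes N: "sets N = sets M"
  shows "integrable (plus_measure M N) f \<longleftrightarrow> integrable M f \<and> integrable N f"
proof (cases "f \<in> borel_measurable M")
  case True
  then show ?thesis using N
    by (simp add: integrable_iff_bounded nn_integral_plus_measure measurable_cong_sets[OF N refl])
next
  case False
  then show ?thesis by (auto dest: borel_measurable_integrable)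
qed

lemma integral_plus_measure:
  fixes f :: "'a \<Rightarrow> 'b::{banach, second_countable_topology}"
  assumes N: "sets N = sets M" and f: "integrable (plus_measure M N) f"
  shows "integral\<^sup>L (plus_measure M N) f = integral\<^sup>L M f + integral\<^sup>L N f"
  using f
proof induct
  case (base A c)
  then have "emeasure M A < \<infinity>" "emeasure N A < \<infinity>" "A \<in> sets M"
    using emeasure_plus_measure[OF N] by auto
  then show ?case using N
    by (simp add: emeasure_plus_measure measure_def enn2real_plus scaleR_add_left)
next
  case (add f g)
  then show ?case using N by (simp add: integrable_plus_measure_iff integral_add)
next
  case (lim f s)
  have "(\<lambda>i. integral\<^sup>L K (s i)) \<longlonglongrightarrow> integral\<^sup>L K f" if "integrable K f" "sets K = sets M" for K
  proof (rule integral_dominated_convergence[where w = "\<lambda>x. 2 * norm (f x)"])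
    show "AE x in K. (\<lambda>i. s i x) \<longlonglongrightarrow> f x" "AE x in K. norm (s i x) \<le> 2 * norm (f x)" for i
      using lim sets_eq_imp_space_eq[OF that(2)] by auto
  qed (use lim that in \<open>auto simp: measurable_cong_sets[OF that(2) refl]\<close>)
  note conv = this
  have "integrable M f" "integrable N f" "\<And>i. integrable M (s i)" "\<And>i. integrable N (s i)"
    using lim N by (auto simp: integrable_plus_measure_iff)
  then have "(\<lambda>i. integral\<^sup>L (plus_measure M N) (s i)) \<longlonglongrightarrow> integral\<^sup>L M f + integral\<^sup>L N f"
    using lim conv[of M] conv[of N] N by (simp add: tendsto_add)
  moreover have "(\<lambda>i. integral\<^sup>L (plus_measure M N) (s i)) \<longlonglongrightarrow> integral\<^sup>L (plus_measure M N) f"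
    using lim by (intro conv) auto
  ultimately show ?case by (rule LIMSEQ_unique[rotated])
qed

section \<open>Complex Radon measures on \<open>[0, \<infinity>)\<close>\<close>

lemma cRadon_sets: "cRadon \<nu> h \<Longrightarrow> sets \<nu> = sets borel"
  by (simp add: cRadon_def)

lemma cRadon_space: "cRadon \<nu> h \<Longrightarrow> space \<nu> = UNIV"
  by (metis cRadon_sets sets_eq_imp_space_eq space_borel)

lemma emeasure_atMost_finite_cRadon:
  assumes "cRadon \<nu> h"
  shows "emeasure \<nu> {..b} < \<infinity>"
proof -
  have sets: "sets \<nu> = sets borel" using assms by (rule cRadon_sets)
  have "emeasure \<nu> {..b} \<le> emeasure \<nu> ({..<0} \<union> {0..b})"
    by (rule emeasure_mono) (auto simp: sets)
  also have "\<dots> \<le> emeasure \<nu> {..<0} + emeasure \<nu> {0..b}"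
    by (rule emeasure_subadditive) (auto simp: sets)
  also have "\<dots> < \<infinity>" using assms by (simp add: cRadon_def)
  finally show ?thesis .
qed

lemma sigma_finite_cRadon:
  assumes "cRadon \<nu> h"
  shows "sigma_finite_measure \<nu>"
proof
  show "\<exists>A. countable A \<and> A \<subseteq> sets \<nu> \<and> \<Union> A = space \<nu> \<and> (\<forall>a\<in>A. emeasure \<nu> a \<noteq> \<infinity>)"
  proof (intro exI conjI)
    show "\<Union> (range (\<lambda>n::nat. {..real n})) = space \<nu>"
      using cRadon_space[OF assms] by (auto intro: real_arch_simple)
  qed (use assms emeasure_atMost_finite_cRadon[OF assms] in \<open>auto simp: cRadon_sets less_top[symmetric]\<close>)
qed

lemma countable_atoms_cRadon:
  assumes "cRadon \<nu> h"
  shows "countable {x. measure \<nu> {x} \<noteq> 0}"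
proof -
  have sets: "sets \<nu> = sets borel" using assms by (rule cRadon_sets)
  define M where "M n = density \<nu> (indicator {..real n})" for n :: nat
  have emeasure_M: "emeasure (M n) A = emeasure \<nu> (A \<inter> {..real n})" if A: "A \<in> sets borel" for n A
  proof -
    have "emeasure (M n) A = (\<integral>\<^sup>+x. indicator {..real n} x * indicator A x \<partial>\<nu>)"
      unfolding M_def by (rule emeasure_density) (use A sets in auto)
    also have "\<dots> = (\<integral>\<^sup>+x. indicator (A \<inter> {..real n}) x \<partial>\<nu>)"
      by (intro nn_integral_cong) (simp split: split_indicator)
    finally show ?thesis using A sets by simp
  qed
  have "finite_measure (M n)" for n
  proof (rule finite_measureI)
    have "emeasure (M n) (space (M n)) = emeasure \<nu> {..real n}"
      using emeasure_M[of UNIV n] by (simp add: M_def cRadon_space[OF assms])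
    then show "emeasure (M n) (space (M n)) \<noteq> \<infinity>"
      using emeasure_atMost_finite_cRadon[OF assms, of "real n"] by simp
  qed
  then have "countable (\<Union>n. {x. measure (M n) {x} \<noteq> 0})"
    by (intro countable_UN) (simp_all add: finite_measure.countable_support)
  moreover have "{x. measure \<nu> {x} \<noteq> 0} \<subseteq> (\<Union>n. {x. measure (M n) {x} \<noteq> 0})"
  proof
    fix x assume x: "x \<in> {x. measure \<nu> {x} \<noteq> 0}"
    obtain n :: nat where "x \<le> real n" using real_arch_simple by blast
    then have "measure (M n) {x} = measure \<nu> {x}"
      using emeasure_M[of "{x}" n] by (simp add: measure_def)
    then show "x \<in> (\<Union>n. {x. measure (M n) {x} \<noteq> 0})" using x by (intro UN_I[of n]) auto
  qed
  ultimately show ?thesis by (rule countable_subset[rotated])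
qed

lemma measurable_atoms_cRadon [measurable]:
  assumes "cRadon \<nu> h"
  shows "(\<lambda>x. measure \<nu> {x}) \<in> borel_measurable borel"
  by (rule measurable_discrete_difference[where f = "\<lambda>_. 0", OF _ countable_atoms_cRadon[OF assms]])
     auto

section \<open>The iterated Stieltjes integral\<close>

lemma ennreal_norm_integral_le:
  fixes f :: "'a \<Rightarrow> 'b::{banach, second_countable_topology}"
  shows "ennreal (norm (integral\<^sup>L M f)) \<le> (\<integral>\<^sup>+x. ennreal (norm (f x)) \<partial>M)"
  by (cases "integrable M f") (simp_all add: integral_norm_bound_ennreal not_integrable_integral_eq)

lemma stint_eq_kernel:
  "stint a b \<nu> h \<nu>' h' \<tau> =
    (\<integral>t. (if \<tau> < t then h' t *
      (\<integral>s. (if 0 \<le> s \<and> s < \<tau> then h s * complex_of_real (stieltjes_kernel a b \<tau> s t) else 0) \<partial>\<nu>)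
     else 0) \<partial>\<nu>')"
  unfolding stint_def set_lebesgue_integral_def stieltjes_kernel_def
  by (simp add: indicator_scaleR_eq_if[where f = "\<lambda>_. y" for y] cong: if_cong)

lemma stint_nonpos: "\<tau> \<le> 0 \<Longrightarrow> stint a b \<nu> h \<nu>' h' \<tau> = 0"
  by (simp add: stint_def set_lebesgue_integral_def)

lemma measurable_stint [measurable]:
  assumes "sigma_finite_measure \<nu>" "sigma_finite_measure \<nu>'"
    and [measurable_cong]: "sets \<nu> = sets borel" "sets \<nu>' = sets borel"
    and [measurable]: "h \<in> borel_measurable borel" "h' \<in> borel_measurable borel"
  shows "stint a b \<nu> h \<nu>' h' \<in> borel_measurable borel"
proof -
  interpret \<nu>: sigma_finite_measure \<nu> by fact
  interpret \<nu>': sigma_finite_measure \<nu>' by fact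
  show ?thesis unfolding stint_eq_kernel[abs_def] by measurable
qed

lemma norm_stint_le:
  assumes "\<And>s. cmod (h s) \<le> 1" "\<And>t. cmod (h' t) \<le> 1"
  shows "ennreal (cmod (stint a b \<nu> h \<nu>' h' \<tau>)) \<le>
    (\<integral>\<^sup>+t. \<integral>\<^sup>+s. (if 0 \<le> s \<and> s < \<tau> \<and> \<tau> < t then ennreal (stieltjes_kernel a b \<tau> s t) else 0) \<partial>\<nu> \<partial>\<nu>')"
proof -
  let ?inner = "\<lambda>t. \<integral>s. (if 0 \<le> s \<and> s < \<tau> then h s * complex_of_real (stieltjes_kernel a b \<tau> s t) else 0) \<partial>\<nu>"
  have "ennreal (cmod (h' t * ?inner t)) \<le> ennreal (cmod (?inner t))" for t
    using assms(2) by (intro ennreal_leI) (simp add: norm_mult mult_left_le_one_le)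
  also have "ennreal (cmod (?inner t))
      \<le> (\<integral>\<^sup>+s. (if 0 \<le> s \<and> s < \<tau> then ennreal (stieltjes_kernel a b \<tau> s t) else 0) \<partial>\<nu>)" for t
    using assms(1)
    by (intro order_trans[OF ennreal_norm_integral_le] nn_integral_mono ennreal_leI)
       (auto simp: norm_mult stieltjes_kernel_nonneg mult_left_le_one_le)
  finally have "ennreal (cmod (if \<tau> < t then h' t * ?inner t else 0))
      \<le> (\<integral>\<^sup>+s. (if 0 \<le> s \<and> s < \<tau> \<and> \<tau> < t then ennreal (stieltjes_kernel a b \<tau> s t) else 0) \<partial>\<nu>)" for t
    by (cases "\<tau> < t") auto
  then show ?thesis
    unfolding stint_eq_kernel by (intro order_trans[OF ennreal_norm_integral_le] nn_integral_mono)
qed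

lemma nn_integral_stint_kernel_le:
  assumes "0 < c" "c < a" "0 < d" "d < b"
  shows "(\<integral>\<^sup>+\<tau>. (if 0 \<le> s \<and> s < \<tau> \<and> \<tau> < t
      then ennreal ((1 + \<tau>) powr -(c + d) * stieltjes_kernel a b \<tau> s t) else 0) \<partial>lborel)
    \<le> (if s < t then ennreal (conv_const a b c d * ((1 + s) powr -d * (1 + t) powr -c)) else 0)"
proof (cases "0 \<le> s \<and> s < t")
  case True
  have "(\<integral>\<^sup>+\<tau>. (if 0 \<le> s \<and> s < \<tau> \<and> \<tau> < t
      then ennreal ((1 + \<tau>) powr -(c + d) * stieltjes_kernel a b \<tau> s t) else 0) \<partial>lborel)
    = (\<integral>\<^sup>+\<tau>. ennreal ((1 + \<tau>) powr -(c + d) * stieltjes_kernel a b \<tau> s t * indicator {s..t} \<tau>) \<partial>lborel)"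
    using True by (intro nn_integral_cong) (auto split: split_indicator)
  also have "\<dots> \<le> ennreal (conv_const a b c d * ((1 + s) powr -d * (1 + t) powr -c))"
    using True assms by (intro nn_integral_weighted_stieltjes_kernel_le) auto
  finally show ?thesis using True by simp
next
  case False
  then have "(0 \<le> s \<and> s < \<tau> \<and> \<tau> < t) = False" for \<tau> by auto
  then show ?thesis by (simp only: if_False) simp
qed

lemma nn_integral_weighted_norm_stint_le:
  assumes "sigma_finite_measure \<nu>" "sigma_finite_measure \<nu>'"
    and [measurable_cong]: "sets \<nu> = sets borel" "sets \<nu>' = sets borel"
    and "\<And>s. cmod (h s) \<le> 1" "\<And>t. cmod (h' t) \<le> 1"
    and "0 < c" "c < a" "0 < d" "d < b"
  shows "(\<integral>\<^sup>+\<tau>. ennreal ((1 + \<tau>) powr -(c + d) * cmod (stint a b \<nu> h \<nu>' h' \<tau>)) \<partial>lborel)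
    \<le> ennreal (conv_const a b c d) *
      (\<integral>\<^sup>+t. \<integral>\<^sup>+s. (if s < t then ennreal ((1 + s) powr -d * (1 + t) powr -c) else 0) \<partial>\<nu> \<partial>\<nu>')"
proof -
  interpret \<nu>: sigma_finite_measure \<nu> by fact
  interpret \<nu>': sigma_finite_measure \<nu>' by fact
  interpret \<nu>'_lborel: pair_sigma_finite \<nu>' lborel ..
  interpret \<nu>_lborel: pair_sigma_finite \<nu> lborel ..
  define F where "F \<tau> t s = (if 0 \<le> s \<and> s < \<tau> \<and> \<tau> < t
    then ennreal ((1 + \<tau>) powr -(c + d) * stieltjes_kernel a b \<tau> s t) else 0)" for \<tau> t s :: real
  have "ennreal ((1 + \<tau>) powr -(c + d) * cmod (stint a b \<nu> h \<nu>' h' \<tau>))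
      \<le> (\<integral>\<^sup>+t. \<integral>\<^sup>+s. F \<tau> t s \<partial>\<nu> \<partial>\<nu>')" for \<tau>
  proof -
    have "ennreal ((1 + \<tau>) powr -(c + d) * cmod (stint a b \<nu> h \<nu>' h' \<tau>))
        \<le> ennreal ((1 + \<tau>) powr -(c + d)) * (\<integral>\<^sup>+t. \<integral>\<^sup>+s.
          (if 0 \<le> s \<and> s < \<tau> \<and> \<tau> < t then ennreal (stieltjes_kernel a b \<tau> s t) else 0) \<partial>\<nu> \<partial>\<nu>')"
      unfolding ennreal_mult'[OF powr_ge_zero] using assms(5,6) by (intro mult_left_mono norm_stint_le) auto
    also have "\<dots> = (\<integral>\<^sup>+t. \<integral>\<^sup>+s. F \<tau> t s \<partial>\<nu> \<partial>\<nu>')"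
      unfolding F_def ennreal_mult'[OF powr_ge_zero] by (simp add: nn_integral_cmult[symmetric] if_distrib cong: if_cong)
    finally show ?thesis .
  qed
  then have "(\<integral>\<^sup>+\<tau>. ennreal ((1 + \<tau>) powr -(c + d) * cmod (stint a b \<nu> h \<nu>' h' \<tau>)) \<partial>lborel)
      \<le> (\<integral>\<^sup>+\<tau>. \<integral>\<^sup>+t. \<integral>\<^sup>+s. F \<tau> t s \<partial>\<nu> \<partial>\<nu>' \<partial>lborel)"
    by (rule nn_integral_mono)
  also have "\<dots> = (\<integral>\<^sup>+t. \<integral>\<^sup>+\<tau>. \<integral>\<^sup>+s. F \<tau> t s \<partial>\<nu> \<partial>lborel \<partial>\<nu>')"
    by (rule \<nu>'_lborel.Fubini') (unfold F_def, measurable)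
  also have "\<dots> = (\<integral>\<^sup>+t. \<integral>\<^sup>+s. \<integral>\<^sup>+\<tau>. F \<tau> t s \<partial>lborel \<partial>\<nu> \<partial>\<nu>')"
    by (intro nn_integral_cong \<nu>_lborel.Fubini') (unfold F_def, measurable)
  also have "\<dots> \<le> (\<integral>\<^sup>+t. \<integral>\<^sup>+s. ennreal (conv_const a b c d) *
      (if s < t then ennreal ((1 + s) powr -d * (1 + t) powr -c) else 0) \<partial>\<nu> \<partial>\<nu>')"
    unfolding F_def using assms(7-10) conv_const_pos[OF assms(7-10)]
    by (intro nn_integral_mono order_trans[OF nn_integral_stint_kernel_le])
       (auto simp: ennreal_mult'[symmetric] mult.assoc)
  also have "\<dots> = (\<integral>\<^sup>+t. ennreal (conv_const a b c d) *
      (\<integral>\<^sup>+s. (if s < t then ennreal ((1 + s) powr -d * (1 + t) powr -c) else 0) \<partial>\<nu>) \<partial>\<nu>')"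
    by (simp add: nn_integral_cmult)
  also have "\<dots> = ennreal (conv_const a b c d) *
      (\<integral>\<^sup>+t. \<integral>\<^sup>+s. (if s < t then ennreal ((1 + s) powr -d * (1 + t) powr -c) else 0) \<partial>\<nu> \<partial>\<nu>')"
    by (rule nn_integral_cmult) measurable
  finally show ?thesis .
qed

section \<open>The Stieltjes convolution\<close>

lemma measurable_sconv_density [measurable]:
  assumes "cRadon \<nu>1 h1" "cRadon \<nu>2 h2"
  shows "sconv_density a1 a2 \<nu>1 h1 \<nu>2 h2 \<in> borel_measurable borel"
proof -
  have [measurable]: "stint a b \<nu> h \<nu>' h' \<in> borel_measurable borel"
    if "cRadon \<nu> h" "cRadon \<nu>' h'" for a b \<nu> h \<nu>' h'
    using that by (intro measurable_stint sigma_finite_cRadon) (auto simp: cRadon_def)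
  show ?thesis using assms unfolding sconv_density_def[abs_def] by measurable
qed

lemma sconv_density_nonpos: "\<tau> \<le> 0 \<Longrightarrow> sconv_density a1 a2 \<nu>1 h1 \<nu>2 h2 \<tau> = 0"
  by (simp add: sconv_density_def stint_nonpos)

text \<open>\<open>sconv_tv\<close> and \<open>sconv_phase\<close> are \<open>|\<mu>|\<close> and \<open>d\<mu>/d|\<mu>|\<close> for \<open>\<mu> = \<mu>1 \<otimes> \<mu>2\<close>. The atomic part lives on
  the atoms of \<open>\<nu>1\<close>, a countable and hence Lebesgue-null set, so the phase may be set to \<open>h1 h2\<close>
  there without affecting the absolutely continuous part.\<close>
definition sconv_tv :: "real \<Rightarrow> real \<Rightarrow> real measure \<Rightarrow> (real \<Rightarrow> complex) \<Rightarrow>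
    real measure \<Rightarrow> (real \<Rightarrow> complex) \<Rightarrow> real measure" where
  "sconv_tv a1 a2 \<nu>1 h1 \<nu>2 h2 = plus_measure
     (density lborel (\<lambda>\<tau>. ennreal (cmod (sconv_density a1 a2 \<nu>1 h1 \<nu>2 h2 \<tau>))))
     (density \<nu>2 (\<lambda>\<tau>. ennreal (measure \<nu>1 {\<tau>})))"

definition sconv_phase :: "real \<Rightarrow> real \<Rightarrow> real measure \<Rightarrow> (real \<Rightarrow> complex) \<Rightarrow>
    real measure \<Rightarrow> (real \<Rightarrow> complex) \<Rightarrow> real \<Rightarrow> complex" where
  "sconv_phase a1 a2 \<nu>1 h1 \<nu>2 h2 \<tau> =
     (if measure \<nu>1 {\<tau>} \<noteq> 0 then h1 \<tau> * h2 \<tau>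
      else if sconv_density a1 a2 \<nu>1 h1 \<nu>2 h2 \<tau> = 0 then 1
      else sgn (sconv_density a1 a2 \<nu>1 h1 \<nu>2 h2 \<tau>))"

lemma sets_sconv_tv [simp, measurable_cong]: "sets (sconv_tv a1 a2 \<nu>1 h1 \<nu>2 h2) = sets borel"
  by (simp add: sconv_tv_def)

lemma wnorm_sconv_tv:
  assumes "cRadon \<nu>1 h1" "cRadon \<nu>2 h2"
  shows "wnorm c (sconv_tv a1 a2 \<nu>1 h1 \<nu>2 h2) =
    (\<integral>\<^sup>+\<tau>. ennreal ((1 + \<tau>) powr -c * cmod (sconv_density a1 a2 \<nu>1 h1 \<nu>2 h2 \<tau>)) \<partial>lborel) +
    (\<integral>\<^sup>+\<tau>. ennreal ((1 + \<tau>) powr -c * measure \<nu>1 {\<tau>}) \<partial>\<nu>2)"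
proof -
  have sets2 [measurable_cong]: "sets \<nu>2 = sets borel" using assms(2) by (rule cRadon_sets)
  note [measurable] = measurable_atoms_cRadon[OF assms(1)] measurable_sconv_density[OF assms]
  show ?thesis
    unfolding wnorm_def sconv_tv_def
    by (subst nn_integral_plus_measure) (auto simp: sets2 nn_integral_density ennreal_mult' mult.commute)
qed

lemma nn_integral_Icc_le_weighted:
  fixes f :: "real \<Rightarrow> ennreal"
  assumes "c \<ge> 0" "f \<in> borel_measurable borel" "sets M = sets borel"
  shows "(\<integral>\<^sup>+t. indicator {0..R} t * f t \<partial>M)
    \<le> ennreal ((1 + R) powr c) * (\<integral>\<^sup>+t. ennreal ((1 + t) powr -c) * f t \<partial>M)"
proof -
  have "indicator {0..R} t \<le> ennreal ((1 + R) powr c) * ennreal ((1 + t) powr -c)" for t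
  proof (cases "t \<in> {0..R}")
    case True
    then have "(1 + t) powr c \<le> (1 + R) powr c" using assms(1) by (intro powr_mono2) auto
    then have "1 \<le> (1 + R) powr c * (1 + t) powr -c"
      using True by (simp add: powr_minus field_simps)
    then show ?thesis using True by (simp add: ennreal_mult'[symmetric])
  qed simp
  then have "(\<integral>\<^sup>+t. indicator {0..R} t * f t \<partial>M)
      \<le> (\<integral>\<^sup>+t. ennreal ((1 + R) powr c) * (ennreal ((1 + t) powr -c) * f t) \<partial>M)"
    by (intro nn_integral_mono) (simp add: mult.assoc[symmetric] mult_right_mono)
  also have "\<dots> = ennreal ((1 + R) powr c) * (\<integral>\<^sup>+t. ennreal ((1 + t) powr -c) * f t \<partial>M)"
    using assms(2,3) by (intro nn_integral_cmult) (simp add: measurable_cong_sets[OF assms(3) refl])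
  finally show ?thesis .
qed

lemma cRadon_sconv_tv:
  assumes "cRadon \<nu>1 h1" "cRadon \<nu>2 h2" "c \<ge> 0" "wnorm c (sconv_tv a1 a2 \<nu>1 h1 \<nu>2 h2) < \<infinity>"
  shows "cRadon (sconv_tv a1 a2 \<nu>1 h1 \<nu>2 h2) (sconv_phase a1 a2 \<nu>1 h1 \<nu>2 h2)"
proof -
  let ?u = "sconv_density a1 a2 \<nu>1 h1 \<nu>2 h2" and ?\<nu> = "sconv_tv a1 a2 \<nu>1 h1 \<nu>2 h2"
  have sets2 [measurable_cong]: "sets \<nu>2 = sets borel" using assms(2) by (rule cRadon_sets)
  have [measurable]: "h1 \<in> borel_measurable borel" "h2 \<in> borel_measurable borel"
    using assms(1,2) by (simp_all add: cRadon_def)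
  note [measurable] = measurable_atoms_cRadon[OF assms(1)] measurable_sconv_density[OF assms(1,2)]
  have "emeasure ?\<nu> {0..R} < \<infinity>" for R
  proof -
    have "emeasure ?\<nu> {0..R} = (\<integral>\<^sup>+t. indicator {0..R} t * 1 \<partial>?\<nu>)" by simp
    also have "\<dots> \<le> ennreal ((1 + R) powr c) * wnorm c ?\<nu>"
      unfolding wnorm_def using assms(3) by (intro order_trans[OF nn_integral_Icc_le_weighted]) auto
    also have "\<dots> < \<infinity>" using assms(4) by (simp add: ennreal_mult_less_top)
    finally show ?thesis .
  qed
  moreover have "emeasure ?\<nu> {..<0} = 0"
  proof -
    have "(\<lambda>\<tau>. ennreal (cmod (?u \<tau>)) * indicator {..<0} \<tau>) = (\<lambda>_. 0)"
      by (auto simp: sconv_density_nonpos split: split_indicator)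
    then have "emeasure (density lborel (\<lambda>\<tau>. ennreal (cmod (?u \<tau>)))) {..<0} = 0"
      by (subst emeasure_density) auto
    moreover have "emeasure (density \<nu>2 (\<lambda>\<tau>. ennreal (measure \<nu>1 {\<tau>}))) {..<0} = 0"
      using assms(2)
      by (subst emeasure_density) (auto intro!: nn_integral_null_set simp: null_sets_def cRadon_def sets2)
    ultimately show ?thesis
      unfolding sconv_tv_def by (subst emeasure_plus_measure) (auto simp: sets2)
  qed
  moreover have "sconv_phase a1 a2 \<nu>1 h1 \<nu>2 h2 \<in> borel_measurable borel"
    unfolding sconv_phase_def[abs_def] by measurable
  moreover have "cmod (sconv_phase a1 a2 \<nu>1 h1 \<nu>2 h2 t) = 1" for t
    using assms(1,2) by (simp add: sconv_phase_def cRadon_def norm_mult norm_sgn)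
  ultimately show ?thesis by (simp add: cRadon_def)
qed

lemma set_integral_sconv_tv:
  assumes "cRadon \<nu>1 h1" "cRadon \<nu>2 h2" "c \<ge> 0" "wnorm c (sconv_tv a1 a2 \<nu>1 h1 \<nu>2 h2) < \<infinity>"
    and A: "A \<in> sets borel" "bounded A" "A \<subseteq> {0..}"
  shows "set_integrable lborel A (sconv_density a1 a2 \<nu>1 h1 \<nu>2 h2)"
    and "(LINT t:A|sconv_tv a1 a2 \<nu>1 h1 \<nu>2 h2. sconv_phase a1 a2 \<nu>1 h1 \<nu>2 h2 t) =
      (LINT \<tau>:A|lborel. sconv_density a1 a2 \<nu>1 h1 \<nu>2 h2 \<tau>) + (LINT \<tau>:A|\<nu>2. ptmass \<nu>1 h1 \<tau> * h2 \<tau>)"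
proof -
  let ?u = "sconv_density a1 a2 \<nu>1 h1 \<nu>2 h2" and ?\<nu> = "sconv_tv a1 a2 \<nu>1 h1 \<nu>2 h2"
    and ?h = "sconv_phase a1 a2 \<nu>1 h1 \<nu>2 h2"
  have sets2 [measurable_cong]: "sets \<nu>2 = sets borel" using assms(2) by (rule cRadon_sets)
  have [measurable]: "h1 \<in> borel_measurable borel" "h2 \<in> borel_measurable borel" "A \<in> sets borel"
    using assms(1,2) A by (simp_all add: cRadon_def)
  note [measurable] = measurable_atoms_cRadon[OF assms(1)] measurable_sconv_density[OF assms(1,2)]
  have cRadon: "cRadon ?\<nu> ?h" using assms(1-4) by (rule cRadon_sconv_tv)
  then have [measurable]: "?h \<in> borel_measurable borel" by (simp add: cRadon_def)
  obtain R where "A \<subseteq> {0..R}" using A(2,3) unfolding bounded_real by fastforce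
  have "(\<integral>\<^sup>+x. ennreal (norm (indicator A x *\<^sub>R ?u x)) \<partial>lborel)
      \<le> (\<integral>\<^sup>+x. indicator {0..R} x * ennreal (cmod (?u x)) \<partial>lborel)"
    by (intro nn_integral_mono) (auto split: split_indicator dest: subsetD[OF \<open>A \<subseteq> {0..R}\<close>])
  also have "\<dots> \<le> ennreal ((1 + R) powr c) * wnorm c ?\<nu>"
    using assms(1-3) by (intro order_trans[OF nn_integral_Icc_le_weighted])
      (auto simp: wnorm_sconv_tv ennreal_mult' intro!: mult_left_mono)
  also have "\<dots> < \<infinity>" using assms(4) by (simp add: ennreal_mult_less_top)
  finally show "set_integrable lborel A ?u"
    unfolding set_integrable_def by (simp add: integrable_iff_bounded)
  have integrable: "integrable ?\<nu> (\<lambda>t. indicator A t *\<^sub>R ?h t)"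
  proof (subst integrable_iff_bounded, intro conjI)
    have "(\<integral>\<^sup>+x. ennreal (norm (indicator A x *\<^sub>R ?h x)) \<partial>?\<nu>) = emeasure ?\<nu> A"
      using cRadon by (simp add: cRadon_def ennreal_indicator)
    also have "\<dots> \<le> emeasure ?\<nu> {0..R}" using \<open>A \<subseteq> {0..R}\<close> by (intro emeasure_mono) auto
    also have "\<dots> < \<infinity>" using cRadon by (simp add: cRadon_def)
    finally show "(\<integral>\<^sup>+x. ennreal (norm (indicator A x *\<^sub>R ?h x)) \<partial>?\<nu>) < \<infinity>" .
  qed measurable
  have "(\<integral>\<tau>. cmod (?u \<tau>) *\<^sub>R (indicator A \<tau> *\<^sub>R ?h \<tau>) \<partial>lborel) = (\<integral>\<tau>. indicator A \<tau> *\<^sub>R ?u \<tau> \<partial>lborel)"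
  proof (rule integral_cong_AE)
    show "AE \<tau> in lborel. cmod (?u \<tau>) *\<^sub>R (indicator A \<tau> *\<^sub>R ?h \<tau>) = indicator A \<tau> *\<^sub>R ?u \<tau>"
      using countable_imp_null_set_lborel[OF countable_atoms_cRadon[OF assms(1)]]
      by (rule AE_I') (auto simp: sconv_phase_def scaleR_conv_of_real sgn_div_norm)
  qed measurable
  moreover have "measure \<nu>1 {\<tau>} *\<^sub>R (indicator A \<tau> *\<^sub>R ?h \<tau>) = indicator A \<tau> *\<^sub>R (ptmass \<nu>1 h1 \<tau> * h2 \<tau>)" for \<tau>
    by (simp add: sconv_phase_def ptmass_def scaleR_conv_of_real)
  ultimately show "(LINT t:A|?\<nu>. ?h t) = (LINT \<tau>:A|lborel. ?u \<tau>) + (LINT \<tau>:A|\<nu>2. ptmass \<nu>1 h1 \<tau> * h2 \<tau>)"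
    using integrable unfolding set_lebesgue_integral_def sconv_tv_def
    by (simp add: integral_plus_measure integrable_plus_measure_iff integral_density sets2)
qed

lemma is_sconv_sconv_tv:
  assumes "cRadon \<nu>1 h1" "cRadon \<nu>2 h2" "c \<ge> 0" "wnorm c (sconv_tv a1 a2 \<nu>1 h1 \<nu>2 h2) < \<infinity>"
  shows "is_sconv a1 a2 \<nu>1 h1 \<nu>2 h2 (sconv_tv a1 a2 \<nu>1 h1 \<nu>2 h2) (sconv_phase a1 a2 \<nu>1 h1 \<nu>2 h2)"
  using cRadon_sconv_tv[OF assms] set_integral_sconv_tv[OF assms] by (simp add: is_sconv_def)

lemma nn_integral_weighted_sconv_density_le_stint:
  assumes "w \<in> borel_measurable borel" "\<And>\<tau>. w \<tau> \<ge> 0" "Beta a1 a2 > 0" "cRadon \<nu>1 h1" "cRadon \<nu>2 h2"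
  shows "(\<integral>\<^sup>+\<tau>. ennreal (w \<tau> * cmod (sconv_density a1 a2 \<nu>1 h1 \<nu>2 h2 \<tau>)) \<partial>lborel)
    \<le> ennreal (1 / Beta a1 a2) *
      ((\<integral>\<^sup>+\<tau>. ennreal (w \<tau> * cmod (stint a2 a1 \<nu>1 h1 \<nu>2 h2 \<tau>)) \<partial>lborel) +
       (\<integral>\<^sup>+\<tau>. ennreal (w \<tau> * cmod (stint a1 a2 \<nu>2 h2 \<nu>1 h1 \<tau>)) \<partial>lborel))"
proof -
  define B S1 S2 where "B = Beta a1 a2" and "S1 = stint a2 a1 \<nu>1 h1 \<nu>2 h2" and "S2 = stint a1 a2 \<nu>2 h2 \<nu>1 h1"
  have [measurable]: "S1 \<in> borel_measurable borel" "S2 \<in> borel_measurable borel" "w \<in> borel_measurable borel"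
    using assms unfolding S1_def S2_def
    by (auto intro!: measurable_stint sigma_finite_cRadon simp: cRadon_def)
  have "ennreal (w \<tau> * cmod (sconv_density a1 a2 \<nu>1 h1 \<nu>2 h2 \<tau>))
      \<le> ennreal (1 / B) * (ennreal (w \<tau> * cmod (S1 \<tau>)) + ennreal (w \<tau> * cmod (S2 \<tau>)))" for \<tau>
  proof -
    have "cmod (sconv_density a1 a2 \<nu>1 h1 \<nu>2 h2 \<tau>) \<le> (cmod (S1 \<tau>) + cmod (S2 \<tau>)) / B"
      using assms(3) unfolding sconv_density_def S1_def S2_def B_def
      by (simp add: norm_divide divide_right_mono norm_triangle_ineq)
    then have "w \<tau> * cmod (sconv_density a1 a2 \<nu>1 h1 \<nu>2 h2 \<tau>) \<le> w \<tau> * ((cmod (S1 \<tau>) + cmod (S2 \<tau>)) / B)"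
      using assms(2) by (rule mult_left_mono)
    also have "\<dots> = 1 / B * (w \<tau> * cmod (S1 \<tau>) + w \<tau> * cmod (S2 \<tau>))"
      by (simp add: field_simps)
    finally have "ennreal (w \<tau> * cmod (sconv_density a1 a2 \<nu>1 h1 \<nu>2 h2 \<tau>))
        \<le> ennreal (1 / B * (w \<tau> * cmod (S1 \<tau>) + w \<tau> * cmod (S2 \<tau>)))"
      by (rule ennreal_leI)
    also have "\<dots> = ennreal (1 / B) * (ennreal (w \<tau> * cmod (S1 \<tau>)) + ennreal (w \<tau> * cmod (S2 \<tau>)))"
      using assms(2,3) by (subst ennreal_mult') (simp_all add: B_def)
    finally show ?thesis .
  qed
  then have "(\<integral>\<^sup>+\<tau>. ennreal (w \<tau> * cmod (sconv_density a1 a2 \<nu>1 h1 \<nu>2 h2 \<tau>)) \<partial>lborel)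
      \<le> (\<integral>\<^sup>+\<tau>. ennreal (1 / B) * (ennreal (w \<tau> * cmod (S1 \<tau>)) + ennreal (w \<tau> * cmod (S2 \<tau>))) \<partial>lborel)"
    by (rule nn_integral_mono)
  also have "\<dots> = ennreal (1 / B) *
      ((\<integral>\<^sup>+\<tau>. ennreal (w \<tau> * cmod (S1 \<tau>)) \<partial>lborel) + (\<integral>\<^sup>+\<tau>. ennreal (w \<tau> * cmod (S2 \<tau>)) \<partial>lborel))"
    by (simp add: nn_integral_cmult nn_integral_add)
  finally show ?thesis by (simp add: B_def S1_def S2_def)
qed

lemma nn_integral_weighted_sconv_density_le:
  assumes "0 < \<beta>1" "\<beta>1 < \<alpha>1" "0 < \<beta>2" "\<beta>2 < \<alpha>2" "cRadon \<nu>1 h1" "cRadon \<nu>2 h2"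
  shows "(\<integral>\<^sup>+\<tau>. ennreal ((1 + \<tau>) powr -(\<beta>1 + \<beta>2) * cmod (sconv_density \<alpha>1 \<alpha>2 \<nu>1 h1 \<nu>2 h2 \<tau>)) \<partial>lborel)
    \<le> ennreal (conv_const \<alpha>1 \<alpha>2 \<beta>1 \<beta>2 / Beta \<alpha>1 \<alpha>2) *
      ((\<integral>\<^sup>+t. \<integral>\<^sup>+s. (if s < t then ennreal ((1 + s) powr -\<beta>1 * (1 + t) powr -\<beta>2) else 0) \<partial>\<nu>1 \<partial>\<nu>2) +
       (\<integral>\<^sup>+t. \<integral>\<^sup>+s. (if t < s then ennreal ((1 + s) powr -\<beta>1 * (1 + t) powr -\<beta>2) else 0) \<partial>\<nu>1 \<partial>\<nu>2))"
    (is "_ \<le> _ * (?J1 + ?J2)")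
proof -
  define B K where "B = Beta \<alpha>1 \<alpha>2" and "K = conv_const \<alpha>1 \<alpha>2 \<beta>1 \<beta>2"
  have B: "B > 0" using assms by (simp add: B_def Beta_pos)
  have K: "K > 0" using assms by (simp add: K_def conv_const_pos)
  have sets: "sets \<nu>1 = sets borel" "sets \<nu>2 = sets borel"
    using assms(5,6) by (simp_all add: cRadon_sets)
  have sigma_finite: "sigma_finite_measure \<nu>1" "sigma_finite_measure \<nu>2"
    using assms(5,6) by (simp_all add: sigma_finite_cRadon)
  interpret \<nu>1_\<nu>2: pair_sigma_finite \<nu>1 \<nu>2 using sigma_finite by (rule pair_sigma_finite.intro)
  have norm_h: "\<And>t. cmod (h1 t) \<le> 1" "\<And>t. cmod (h2 t) \<le> 1" using assms(5,6) by (simp_all add: cRadon_def)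
  have "(\<integral>\<^sup>+\<tau>. ennreal ((1 + \<tau>) powr -(\<beta>1 + \<beta>2) * cmod (sconv_density \<alpha>1 \<alpha>2 \<nu>1 h1 \<nu>2 h2 \<tau>)) \<partial>lborel)
      \<le> ennreal (1 / B) *
        ((\<integral>\<^sup>+\<tau>. ennreal ((1 + \<tau>) powr -(\<beta>2 + \<beta>1) * cmod (stint \<alpha>2 \<alpha>1 \<nu>1 h1 \<nu>2 h2 \<tau>)) \<partial>lborel) +
         (\<integral>\<^sup>+\<tau>. ennreal ((1 + \<tau>) powr -(\<beta>1 + \<beta>2) * cmod (stint \<alpha>1 \<alpha>2 \<nu>2 h2 \<nu>1 h1 \<tau>)) \<partial>lborel))"
    using nn_integral_weighted_sconv_density_le_stint[of "\<lambda>\<tau>. (1 + \<tau>) powr -(\<beta>1 + \<beta>2)"] B assms(5,6)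
    by (simp add: B_def add.commute)
  also have "\<dots> \<le> ennreal (1 / B) * (ennreal K * ?J1 + ennreal K * ?J2)"
  proof (intro mult_left_mono add_mono)
    show "(\<integral>\<^sup>+\<tau>. ennreal ((1 + \<tau>) powr -(\<beta>2 + \<beta>1) * cmod (stint \<alpha>2 \<alpha>1 \<nu>1 h1 \<nu>2 h2 \<tau>)) \<partial>lborel)
        \<le> ennreal K * ?J1"
      using nn_integral_weighted_norm_stint_le[of \<nu>1 \<nu>2 h1 h2 \<beta>2 \<alpha>2 \<beta>1 \<alpha>1] assms sigma_finite sets norm_h
      by (simp add: K_def conv_const_commute)
    have "(\<integral>\<^sup>+\<tau>. ennreal ((1 + \<tau>) powr -(\<beta>1 + \<beta>2) * cmod (stint \<alpha>1 \<alpha>2 \<nu>2 h2 \<nu>1 h1 \<tau>)) \<partial>lborel)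
        \<le> ennreal K *
          (\<integral>\<^sup>+t. \<integral>\<^sup>+s. (if s < t then ennreal ((1 + s) powr -\<beta>2 * (1 + t) powr -\<beta>1) else 0) \<partial>\<nu>2 \<partial>\<nu>1)"
      using nn_integral_weighted_norm_stint_le[of \<nu>2 \<nu>1 h2 h1 \<beta>1 \<alpha>1 \<beta>2 \<alpha>2] assms sigma_finite sets norm_h
      by (simp add: K_def)
    also have "(\<integral>\<^sup>+t. \<integral>\<^sup>+s. (if s < t then ennreal ((1 + s) powr -\<beta>2 * (1 + t) powr -\<beta>1) else 0) \<partial>\<nu>2 \<partial>\<nu>1) = ?J2"
      using sets by (subst \<nu>1_\<nu>2.Fubini') (simp_all add: mult.commute cong: if_cong)
    finally show "(\<integral>\<^sup>+\<tau>. ennreal ((1 + \<tau>) powr -(\<beta>1 + \<beta>2) * cmod (stint \<alpha>1 \<alpha>2 \<nu>2 h2 \<nu>1 h1 \<tau>)) \<partial>lborel)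
        \<le> ennreal K * ?J2" .
  qed simp
  also have "\<dots> = ennreal (K / B) * (?J1 + ?J2)"
    using B K by (simp add: distrib_left mult.assoc[symmetric] ennreal_mult'[symmetric])
  finally show ?thesis by (simp add: B_def K_def)
qed

lemma nn_integral_nn_integral_add:
  assumes "sigma_finite_measure M"
    and "(\<lambda>(t, s). f t s) \<in> borel_measurable (N \<Otimes>\<^sub>M M)" "(\<lambda>(t, s). g t s) \<in> borel_measurable (N \<Otimes>\<^sub>M M)"
  shows "(\<integral>\<^sup>+t. \<integral>\<^sup>+s. f t s \<partial>M \<partial>N) + (\<integral>\<^sup>+t. \<integral>\<^sup>+s. g t s \<partial>M \<partial>N) = (\<integral>\<^sup>+t. \<integral>\<^sup>+s. f t s + g t s \<partial>M \<partial>N)"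
proof -
  interpret M: sigma_finite_measure M by fact
  note [measurable] = assms(2,3)
  have "(\<integral>\<^sup>+t. \<integral>\<^sup>+s. f t s \<partial>M \<partial>N) + (\<integral>\<^sup>+t. \<integral>\<^sup>+s. g t s \<partial>M \<partial>N)
      = (\<integral>\<^sup>+t. (\<integral>\<^sup>+s. f t s \<partial>M) + (\<integral>\<^sup>+s. g t s \<partial>M) \<partial>N)"
    by (rule nn_integral_add[symmetric]) measurable
  also have "\<dots> = (\<integral>\<^sup>+t. \<integral>\<^sup>+s. f t s + g t s \<partial>M \<partial>N)"
    by (intro nn_integral_cong nn_integral_add[symmetric]) measurable
  finally show ?thesis .
qed

lemma wnorm_mult_wnorm:
  assumes "sigma_finite_measure \<nu>1" and [measurable_cong]: "sets \<nu>1 = sets borel" "sets \<nu>2 = sets borel"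
  shows "wnorm b1 \<nu>1 * wnorm b2 \<nu>2 =
    (\<integral>\<^sup>+t. \<integral>\<^sup>+s. (if s < t then ennreal ((1 + s) powr -b1 * (1 + t) powr -b2) else 0) \<partial>\<nu>1 \<partial>\<nu>2) +
    (\<integral>\<^sup>+t. \<integral>\<^sup>+s. (if t < s then ennreal ((1 + s) powr -b1 * (1 + t) powr -b2) else 0) \<partial>\<nu>1 \<partial>\<nu>2) +
    (\<integral>\<^sup>+t. \<integral>\<^sup>+s. (if s = t then ennreal ((1 + s) powr -b1 * (1 + t) powr -b2) else 0) \<partial>\<nu>1 \<partial>\<nu>2)"
proof -
  interpret \<nu>1: sigma_finite_measure \<nu>1 by fact
  let ?P = "\<lambda>s t. ennreal ((1 + s) powr -b1 * (1 + t) powr -b2)"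
  have "wnorm b1 \<nu>1 * wnorm b2 \<nu>2 = (\<integral>\<^sup>+t. wnorm b1 \<nu>1 * ennreal ((1 + t) powr -b2) \<partial>\<nu>2)"
    unfolding wnorm_def by (rule nn_integral_cmult[symmetric]) measurable
  also have "\<dots> = (\<integral>\<^sup>+t. \<integral>\<^sup>+s. ?P s t \<partial>\<nu>1 \<partial>\<nu>2)"
    unfolding wnorm_def by (intro nn_integral_cong) (simp add: ennreal_mult' nn_integral_multc)
  also have "\<dots> = (\<integral>\<^sup>+t. \<integral>\<^sup>+s. (if s < t then ?P s t else 0) + (if t < s then ?P s t else 0)
      + (if s = t then ?P s t else 0) \<partial>\<nu>1 \<partial>\<nu>2)"
    by (intro nn_integral_cong) (auto simp: less_le)
  also have "\<dots> = (\<integral>\<^sup>+t. \<integral>\<^sup>+s. (if s < t then ?P s t else 0) + (if t < s then ?P s t else 0) \<partial>\<nu>1 \<partial>\<nu>2)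
      + (\<integral>\<^sup>+t. \<integral>\<^sup>+s. (if s = t then ?P s t else 0) \<partial>\<nu>1 \<partial>\<nu>2)"
    by (rule nn_integral_nn_integral_add[symmetric, OF assms(1)]) (measurable, measurable)
  also have "(\<integral>\<^sup>+t. \<integral>\<^sup>+s. (if s < t then ?P s t else 0) + (if t < s then ?P s t else 0) \<partial>\<nu>1 \<partial>\<nu>2)
      = (\<integral>\<^sup>+t. \<integral>\<^sup>+s. (if s < t then ?P s t else 0) \<partial>\<nu>1 \<partial>\<nu>2) + (\<integral>\<^sup>+t. \<integral>\<^sup>+s. (if t < s then ?P s t else 0) \<partial>\<nu>1 \<partial>\<nu>2)"
    by (rule nn_integral_nn_integral_add[symmetric, OF assms(1)]) (measurable, measurable)
  finally show ?thesis .
qed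

lemma nn_integral_weighted_atoms:
  assumes "cRadon \<nu>1 h1" "sets \<nu>2 = sets borel"
  shows "(\<integral>\<^sup>+\<tau>. ennreal ((1 + \<tau>) powr -(b1 + b2) * measure \<nu>1 {\<tau>}) \<partial>\<nu>2)
    = (\<integral>\<^sup>+t. \<integral>\<^sup>+s. (if s = t then ennreal ((1 + s) powr -b1 * (1 + t) powr -b2) else 0) \<partial>\<nu>1 \<partial>\<nu>2)"
proof (intro nn_integral_cong)
  fix t :: real
  have "emeasure \<nu>1 {t} \<le> emeasure \<nu>1 {..t}"
    using assms(1) by (intro emeasure_mono) (auto simp: cRadon_sets)
  then have finite: "emeasure \<nu>1 {t} \<noteq> \<infinity>"
    using emeasure_atMost_finite_cRadon[OF assms(1), of t] by (auto simp: top_unique)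
  have "(\<integral>\<^sup>+s. (if s = t then ennreal ((1 + s) powr -b1 * (1 + t) powr -b2) else 0) \<partial>\<nu>1)
      = (\<integral>\<^sup>+s. ennreal ((1 + t) powr -(b1 + b2)) * indicator {t} s \<partial>\<nu>1)"
    by (intro nn_integral_cong) (simp add: powr_add[symmetric] split: split_indicator)
  also have "\<dots> = ennreal ((1 + t) powr -(b1 + b2)) * emeasure \<nu>1 {t}"
    using assms(1) by (simp add: cRadon_sets)
  also have "\<dots> = ennreal ((1 + t) powr -(b1 + b2) * measure \<nu>1 {t})"
    using finite by (simp add: emeasure_eq_ennreal_measure ennreal_mult')
  finally show "ennreal ((1 + t) powr -(b1 + b2) * measure \<nu>1 {t})
      = (\<integral>\<^sup>+s. (if s = t then ennreal ((1 + s) powr -b1 * (1 + t) powr -b2) else 0) \<partial>\<nu>1)"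
    by (rule sym)
qed

lemma wnorm_sconv_tv_le:
  assumes "0 < \<beta>1" "\<beta>1 < \<alpha>1" "0 < \<beta>2" "\<beta>2 < \<alpha>2" "cRadon \<nu>1 h1" "cRadon \<nu>2 h2"
  shows "wnorm (\<beta>1 + \<beta>2) (sconv_tv \<alpha>1 \<alpha>2 \<nu>1 h1 \<nu>2 h2)
    \<le> ennreal (conv_const \<alpha>1 \<alpha>2 \<beta>1 \<beta>2 / Beta \<alpha>1 \<alpha>2) * (wnorm \<beta>1 \<nu>1 * wnorm \<beta>2 \<nu>2)"
proof -
  define C where "C = conv_const \<alpha>1 \<alpha>2 \<beta>1 \<beta>2 / Beta \<alpha>1 \<alpha>2"
  let ?J = "\<lambda>R. \<integral>\<^sup>+t. \<integral>\<^sup>+s. (if R s t then ennreal ((1 + s) powr -\<beta>1 * (1 + t) powr -\<beta>2) else 0) \<partial>\<nu>1 \<partial>\<nu>2"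
  have sets: "sets \<nu>1 = sets borel" "sets \<nu>2 = sets borel"
    using assms(5,6) by (simp_all add: cRadon_sets)
  have "1 \<le> C"
    using Beta_le_conv_const[OF assms(1-4)] Beta_pos[of \<alpha>1 \<alpha>2] assms by (simp add: C_def)
  have "wnorm (\<beta>1 + \<beta>2) (sconv_tv \<alpha>1 \<alpha>2 \<nu>1 h1 \<nu>2 h2) \<le> ennreal C * (?J (<) + ?J (\<lambda>s t. t < s)) + ?J (=)"
    unfolding wnorm_sconv_tv[OF assms(5,6)] C_def
    using nn_integral_weighted_sconv_density_le[OF assms] nn_integral_weighted_atoms[OF assms(5) sets(2)]
    by (intro add_mono) simp_all
  also have "\<dots> \<le> ennreal C * (?J (<) + ?J (\<lambda>s t. t < s)) + ennreal C * ?J (=)"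
    using \<open>1 \<le> C\<close> ennreal_leI[of 1 C] mult_right_mono[of 1 "ennreal C" "?J (=)"]
    by (intro add_left_mono) simp
  also have "\<dots> = ennreal C * (wnorm \<beta>1 \<nu>1 * wnorm \<beta>2 \<nu>2)"
    unfolding wnorm_mult_wnorm[OF sigma_finite_cRadon[OF assms(5)] sets] by (simp add: distrib_left)
  finally show ?thesis by (simp add: C_def)
qed

theorem theorem4p3:
  fixes \<alpha>1 \<alpha>2 \<beta>1 \<beta>2 :: real
    and \<nu>1 \<nu>2 :: "real measure" and h1 h2 :: "real \<Rightarrow> complex"
  defines "\<gamma>1 \<equiv> \<alpha>1 - \<beta>1" and "\<gamma>2 \<equiv> \<alpha>2 - \<beta>2"
  assumes "\<alpha>1 > 0" "\<alpha>2 > 0"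
    and "0 < \<beta>1" "\<beta>1 < \<alpha>1" "0 < \<beta>2" "\<beta>2 < \<alpha>2"
    and "cRadon \<nu>1 h1" "wnorm \<beta>1 \<nu>1 < \<infinity>"
    and "cRadon \<nu>2 h2" "wnorm \<beta>2 \<nu>2 < \<infinity>"
  shows "\<exists>\<nu> h. is_sconv \<alpha>1 \<alpha>2 \<nu>1 h1 \<nu>2 h2 \<nu> h \<and>
           wnorm (\<beta>1 + \<beta>2) \<nu> < \<infinity> \<and>
           wnorm (\<beta>1 + \<beta>2) \<nu> \<le>
             ennreal (min
               (\<beta>1 powr \<beta>1 * \<beta>2 powr \<beta>2 / (\<beta>1 + \<beta>2) powr (\<beta>1 + \<beta>2)
                  * Beta \<gamma>1 \<gamma>2 / Beta \<alpha>1 \<alpha>2)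
               (\<gamma>1 powr \<gamma>1 * \<gamma>2 powr \<gamma>2 / (\<gamma>1 + \<gamma>2) powr (\<gamma>1 + \<gamma>2)
                  * Beta \<beta>1 \<beta>2 / Beta \<alpha>1 \<alpha>2))
             * wnorm \<beta>1 \<nu>1 * wnorm \<beta>2 \<nu>2"
proof -
  let ?\<nu> = "sconv_tv \<alpha>1 \<alpha>2 \<nu>1 h1 \<nu>2 h2"
  have "min (\<beta>1 powr \<beta>1 * \<beta>2 powr \<beta>2 / (\<beta>1 + \<beta>2) powr (\<beta>1 + \<beta>2) * Beta \<gamma>1 \<gamma>2 / Beta \<alpha>1 \<alpha>2)
      (\<gamma>1 powr \<gamma>1 * \<gamma>2 powr \<gamma>2 / (\<gamma>1 + \<gamma>2) powr (\<gamma>1 + \<gamma>2) * Beta \<beta>1 \<beta>2 / Beta \<alpha>1 \<alpha>2)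
      = conv_const \<alpha>1 \<alpha>2 \<beta>1 \<beta>2 / Beta \<alpha>1 \<alpha>2"
    using Beta_pos[of \<alpha>1 \<alpha>2] assms
    by (simp add: conv_const_def amgm_const_def \<gamma>1_def \<gamma>2_def min_divide_distrib_right)
  moreover have "wnorm (\<beta>1 + \<beta>2) ?\<nu> \<le> ennreal (conv_const \<alpha>1 \<alpha>2 \<beta>1 \<beta>2 / Beta \<alpha>1 \<alpha>2) * (wnorm \<beta>1 \<nu>1 * wnorm \<beta>2 \<nu>2)"
    using assms by (intro wnorm_sconv_tv_le) auto
  moreover from this have "wnorm (\<beta>1 + \<beta>2) ?\<nu> < \<infinity>"
    using assms by (auto simp: ennreal_mult_less_top intro: le_less_trans)
  moreover from this have "is_sconv \<alpha>1 \<alpha>2 \<nu>1 h1 \<nu>2 h2 ?\<nu> (sconv_phase \<alpha>1 \<alpha>2 \<nu>1 h1 \<nu>2 h2)"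
    using assms by (intro is_sconv_sconv_tv) auto
  ultimately show ?thesis by (auto simp: mult.assoc)
qed

end
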